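(* For every $d\geq1$ and $0<\alpha<d$ there exists a constant $\beta_1=\beta_1(d,\alpha)<\infty$ such that the following holds: if $J:\mathbb Z^d\times\mathbb Z^d\to[0,\infty)$ is a symmetric, integrable, translation-invariant kernel and $c>0$ is such that $J(x,y)\geq c\|x-y\|_\infty^{-d-\alpha}$ for all distinct $x,y\in\mathbb Z^d$, then $c\beta_c\leq\beta_1$.
   Context: A kernel $J$ is symmetric if $J(x,y)=J(y,x)$, translation-invariant if $J(x,y)=J(0,y-x)$, and integrable if $\sum_{y\in\mathbb Z^d}J(x,y)<\infty$ for every $x$. For $\beta\geq 0$, long-range percolation on $\mathbb Z^d$ with kernel $J$ and parameter $\beta$ is the random graph with vertex set $\mathbb Z^d$ in which each unordered pair $\{x,y\}$ of distinct points is an edge independently with probability $1-\exp(-\beta J(x,y))$; $\mathbf P_\beta$ denotes its law, and $\beta_c=\inf\{\beta\geq 0:\mathbf P_\beta(\text{an infinite cluster exists})>0\}$. *)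

theory Defs
  imports "HOL-Probability.Probability"
begin

text \<open>Vertices of Z^d are integer lists of length d.\<close>
definition lattice :: "nat \<Rightarrow> int list set" where
  "lattice d = {x. length x = d}"

definition vdiff :: "int list \<Rightarrow> int list \<Rightarrow> int list" where
  "vdiff y x = map2 (\<lambda>a b. a - b) y x"

definition linf_norm :: "int list \<Rightarrow> real" where
  "linf_norm z = real_of_int (Max (insert 0 (abs ` set z)))"

definition lrp_edges :: "nat \<Rightarrow> int list set set" where
  "lrp_edges d = {{x, y} | x y. x \<in> lattice d \<and> y \<in> lattice d \<and> x \<noteq> y}"

definition edge_weight :: "(int list \<Rightarrow> int list \<Rightarrow> real) \<Rightarrow> int list set \<Rightarrow> real" where
  "edge_weight J e = (THE w. \<exists>x y. e = {x, y} \<and> w = J x y)"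

definition lrp_measure :: "nat \<Rightarrow> (int list \<Rightarrow> int list \<Rightarrow> real) \<Rightarrow> real \<Rightarrow> (int list set \<Rightarrow> bool) measure" where
  "lrp_measure d J \<beta> = (\<Pi>\<^sub>M e\<in>lrp_edges d.
      measure_pmf (bernoulli_pmf (1 - exp (- \<beta> * edge_weight J e))))"

definition open_adj :: "nat \<Rightarrow> (int list set \<Rightarrow> bool) \<Rightarrow> int list \<Rightarrow> int list \<Rightarrow> bool" where
  "open_adj d \<omega> x y \<longleftrightarrow> x \<in> lattice d \<and> y \<in> lattice d \<and> x \<noteq> y \<and> \<omega> {x, y}"

definition cluster :: "nat \<Rightarrow> (int list set \<Rightarrow> bool) \<Rightarrow> int list \<Rightarrow> int list set" where
  "cluster d \<omega> x = {y. (open_adj d \<omega>)\<^sup>*\<^sup>* x y}"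

definition infinite_cluster_event :: "nat \<Rightarrow> (int list \<Rightarrow> int list \<Rightarrow> real) \<Rightarrow> real \<Rightarrow> (int list set \<Rightarrow> bool) set" where
  "infinite_cluster_event d J \<beta> =
     {\<omega> \<in> space (lrp_measure d J \<beta>). \<exists>x\<in>lattice d. infinite (cluster d \<omega> x)}"

text \<open>Critical parameter, valued in the extended reals (Inf {} = \<infinity>).\<close>
definition beta_c :: "nat \<Rightarrow> (int list \<Rightarrow> int list \<Rightarrow> real) \<Rightarrow> ereal" where
  "beta_c d J = Inf {ereal \<beta> | \<beta>. \<beta> \<ge> 0 \<and>
      measure (lrp_measure d J \<beta>) (infinite_cluster_event d J \<beta>) > 0}"

definition admissible_kernel :: "nat \<Rightarrow> (int list \<Rightarrow> int list \<Rightarrow> real) \<Rightarrow> bool" where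
  "admissible_kernel d J \<longleftrightarrow>
     (\<forall>x\<in>lattice d. \<forall>y\<in>lattice d. J x y \<ge> 0) \<and>
     (\<forall>x\<in>lattice d. \<forall>y\<in>lattice d. J x y = J y x) \<and>
     (\<forall>x\<in>lattice d. \<forall>y\<in>lattice d. J x y = J (replicate d 0) (vdiff y x)) \<and>
     (\<forall>x\<in>lattice d. (\<lambda>y. J x y) summable_on lattice d)"

end

theory Submission
  imports Defs
begin

text \<open>A multiscale renormalisation argument. Cut the lattice into nested blocks of side L^k;
  every block of level 0 is good, and a block of level k + 1 is good if at most one of its L^d
  children is bad and the giants of any two good children are joined by an open edge. The giant
  of a good block (the union of the giants of its good children) is connected and has at least
  (L^d - 1)^k vertices, so two giants inside a block of side L^(k+1) are joined by at least
  (L^d - 1)^(2k) potential edges, each of weight at least c L^(-(k+1)(d+\<alpha>)). Because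
  L^(d-\<alpha>) \<ge> 8 this total weight grows like 2^k, and since disjoint blocks are independent the
  probability q_k that a block is bad satisfies q_(k+1) \<le> L^(2d) (q_k^2 + exp(-t)^(k+1)) with
  t = \<beta> c L^(-d-\<alpha>). Once t \<ge> ln(16 L^(4d)) this gives q_k \<le> 2^(-k) / (4 L^(2d)), so with
  positive probability the block of the origin is good at every level and its cluster is infinite.
  Hence c \<beta>_c \<le> L^(d+\<alpha>) ln(16 L^(4d)), which depends on d and \<alpha> only.\<close>

section \<open>Independent edge configurations\<close>

lemma emeasure_pair_pmf_section:
  "emeasure (measure_pmf (pair_pmf X Y)) S =
     (\<integral>\<^sup>+ x. emeasure (measure_pmf Y) (Pair x -` S) \<partial>measure_pmf X)"
proof -
  have "(\<integral>\<^sup>+ y. indicator S (x, y) \<partial>measure_pmf Y) = emeasure (measure_pmf Y) (Pair x -` S)" for x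
  proof -
    have "(\<integral>\<^sup>+ y. indicator S (x, y) \<partial>measure_pmf Y) = (\<integral>\<^sup>+ y. indicator (Pair x -` S) y \<partial>measure_pmf Y)"
      by (intro nn_integral_cong) (simp split: split_indicator)
    thus ?thesis by simp
  qed
  thus ?thesis unfolding pair_pmf_def by simp
qed

locale edge_product =
  fixes I :: "'e set" and p :: "'e \<Rightarrow> bool pmf"
begin

definition Pm :: "('e \<Rightarrow> bool) measure" where
  "Pm = (\<Pi>\<^sub>M e\<in>I. measure_pmf (p e))"

definition Pr :: "(('e \<Rightarrow> bool) \<Rightarrow> bool) \<Rightarrow> real" where
  "Pr Q = measure Pm {\<omega> \<in> space Pm. Q \<omega>}"

definition depends_on :: "'e set \<Rightarrow> (('e \<Rightarrow> bool) \<Rightarrow> bool) \<Rightarrow> bool" where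
  "depends_on F Q \<longleftrightarrow> (\<forall>\<omega> \<omega>'. (\<forall>e\<in>F. \<omega> e = \<omega>' e) \<longrightarrow> Q \<omega> = Q \<omega>')"

definition merge :: "'e set \<Rightarrow> ('e \<Rightarrow> bool) \<Rightarrow> ('e \<Rightarrow> bool) \<Rightarrow> 'e \<Rightarrow> bool" where
  "merge F \<omega> \<omega>' = (\<lambda>e. if e \<in> F then \<omega> e else \<omega>' e)"

lemma prob_space_Pm: "prob_space Pm"
  unfolding Pm_def by (intro prob_space_PiM measure_pmf.prob_space_axioms)

lemma depends_onI:
  "(\<And>\<omega> \<omega>'. (\<And>e. e \<in> F \<Longrightarrow> \<omega> e = \<omega>' e) \<Longrightarrow> Q \<omega> = Q \<omega>') \<Longrightarrow> depends_on F Q"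
  unfolding depends_on_def by blast

lemma depends_onD:
  "depends_on F Q \<Longrightarrow> (\<And>e. e \<in> F \<Longrightarrow> \<omega> e = \<omega>' e) \<Longrightarrow> Q \<omega> = Q \<omega>'"
  unfolding depends_on_def by blast

lemma depends_on_mono: "depends_on F Q \<Longrightarrow> F \<subseteq> G \<Longrightarrow> depends_on G Q"
  unfolding depends_on_def by blast

lemma distr_restrict_Pi_pmf:
  assumes fin: "finite F"
  shows "distr (measure_pmf (Pi_pmf F False p)) (\<Pi>\<^sub>M e\<in>F. measure_pmf (p e)) (\<lambda>\<omega>. restrict \<omega> F)
         = (\<Pi>\<^sub>M e\<in>F. measure_pmf (p e))"
proof (rule product_sigma_finite.PiM_eqI, goal_cases)
  case 1
  interpret product_prob_space "\<lambda>e. measure_pmf (p e)"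
    by (intro product_prob_spaceI measure_pmf.prob_space_axioms)
  show ?case by unfold_locales
next
  case (4 A)
  have "Pi\<^sub>E F A \<in> sets (\<Pi>\<^sub>M e\<in>F. measure_pmf (p e))"
    using 4 by (intro sets_PiM_I_finite fin) auto
  hence "emeasure (distr (measure_pmf (Pi_pmf F False p)) (\<Pi>\<^sub>M e\<in>F. measure_pmf (p e))
           (\<lambda>\<omega>. restrict \<omega> F)) (Pi\<^sub>E F A)
       = emeasure (measure_pmf (Pi_pmf F False p)) ((\<lambda>\<omega>. restrict \<omega> F) -` Pi\<^sub>E F A)"
    using 4 by (subst emeasure_distr) (auto simp: space_PiM)
  also have "\<dots> = emeasure (measure_pmf (Pi_pmf F False p)) (PiE_dflt F False A)"
    by (intro emeasure_eq_AE AE_pmfI) (auto simp: PiE_dflt_def set_Pi_pmf fin)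
  also have "\<dots> = (\<Prod>e\<in>F. emeasure (measure_pmf (p e)) (A e))"
    by (simp add: measure_pmf.emeasure_eq_measure measure_Pi_pmf_PiE_dflt fin prod_ennreal)
  finally show ?case .
qed (use fin in auto)

lemma
  assumes fin: "finite F" and FI: "F \<subseteq> I" and dep: "depends_on F Q"
  shows sets_depends_on: "{\<omega> \<in> space Pm. Q \<omega>} \<in> sets Pm"
    and Pr_depends_on: "Pr Q = measure_pmf.prob (Pi_pmf F False p) {\<omega>. Q \<omega>}"
proof -
  let ?M = "\<lambda>e. measure_pmf (p e)"
  interpret product_prob_space ?M I by (intro product_prob_spaceI measure_pmf.prob_space_axioms)
  have restrict: "Q (restrict \<omega> F) = Q \<omega>" for \<omega>
    by (rule depends_onD[OF dep]) simp
  define X where "X = {\<omega> \<in> Pi\<^sub>E F (\<lambda>_. UNIV). Q \<omega>}"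
  have emb: "{\<omega> \<in> space Pm. Q \<omega>} = prod_emb I ?M F X"
    unfolding X_def prod_emb_def Pm_def by (auto simp: space_PiM restrict)
  have "finite X" unfolding X_def
    by (rule finite_subset[OF _ finite_PiE[OF fin, of "\<lambda>_. UNIV"]]) auto
  moreover have "X = (\<Union>\<omega>\<in>X. Pi\<^sub>E F (\<lambda>e. {\<omega> e}))"
  proof -
    have "Pi\<^sub>E F (\<lambda>e. {\<omega> e}) = {\<omega>}" if "\<omega> \<in> X" for \<omega>
      using that unfolding X_def by (intro PiE_singleton) (auto simp: PiE_def)
    thus ?thesis by auto
  qed
  ultimately have X: "X \<in> sets (Pi\<^sub>M F ?M)"
    by (metis sets.finite_UN sets_PiM_I_finite fin sets_measure_pmf UNIV_I)
  show "{\<omega> \<in> space Pm. Q \<omega>} \<in> sets Pm"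
    using emb measurable_prod_emb[OF FI X] Pm_def by simp
  have m: "(\<lambda>\<omega>. restrict \<omega> F) \<in> measurable (measure_pmf (Pi_pmf F False p)) (Pi\<^sub>M F ?M)"
    unfolding measurable_pmf_measure1 by (auto simp: space_PiM)
  have "emeasure Pm {\<omega> \<in> space Pm. Q \<omega>} = emeasure (Pi\<^sub>M F ?M) X"
    using emb emeasure_PiM_emb'[OF FI fin X] by (simp add: Pm_def)
  also have "\<dots> = emeasure (measure_pmf (Pi_pmf F False p)) ((\<lambda>\<omega>. restrict \<omega> F) -` X)"
    using emeasure_distr[OF m X] by (simp add: distr_restrict_Pi_pmf fin)
  also have "(\<lambda>\<omega>. restrict \<omega> F) -` X = {\<omega>. Q \<omega>}"
    unfolding X_def using restrict by auto
  finally show "Pr Q = measure_pmf.prob (Pi_pmf F False p) {\<omega>. Q \<omega>}"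
    by (simp only: Pr_def measure_def)
qed

lemma Pr_nonneg: "0 \<le> Pr Q"
  unfolding Pr_def by simp

lemma Pr_le_1: "Pr Q \<le> 1"
  unfolding Pr_def using prob_space.prob_le_1[OF prob_space_Pm] by blast

lemma Pr_disj_le:
  assumes "{\<omega> \<in> space Pm. Q \<omega>} \<in> sets Pm" and "{\<omega> \<in> space Pm. R \<omega>} \<in> sets Pm"
  shows "Pr (\<lambda>\<omega>. Q \<omega> \<or> R \<omega>) \<le> Pr Q + Pr R"
proof -
  have "{\<omega> \<in> space Pm. Q \<omega> \<or> R \<omega>} = {\<omega> \<in> space Pm. Q \<omega>} \<union> {\<omega> \<in> space Pm. R \<omega>}" by auto
  thus ?thesis unfolding Pr_def using measure_Un_le[OF assms] by simp
qed

lemma Pr_Bex_le: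
  assumes "finite T" and "\<And>i. i \<in> T \<Longrightarrow> {\<omega> \<in> space Pm. Q i \<omega>} \<in> sets Pm"
  shows "Pr (\<lambda>\<omega>. \<exists>i\<in>T. Q i \<omega>) \<le> (\<Sum>i\<in>T. Pr (Q i))"
proof -
  have "{\<omega> \<in> space Pm. \<exists>i\<in>T. Q i \<omega>} = (\<Union>i\<in>T. {\<omega> \<in> space Pm. Q i \<omega>})" by auto
  moreover have "measure Pm (\<Union>i\<in>T. {\<omega> \<in> space Pm. Q i \<omega>}) \<le> (\<Sum>i\<in>T. measure Pm {\<omega> \<in> space Pm. Q i \<omega>})"
    using prob_space.finite_measure[OF prob_space_Pm] assms
    by (intro finite_measure.finite_measure_subadditive_finite) auto
  ultimately show ?thesis unfolding Pr_def by simp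
qed

lemma Pr_all_closed:
  assumes "finite F" and "F \<subseteq> I"
  shows "Pr (\<lambda>\<omega>. \<forall>e\<in>F. \<not> \<omega> e) = (\<Prod>e\<in>F. pmf (p e) False)"
proof -
  have "{\<omega>. \<forall>e\<in>F. \<not> \<omega> e} = Pi F (\<lambda>_. {False})" by (auto simp: Pi_def)
  moreover have "depends_on F (\<lambda>\<omega>. \<forall>e\<in>F. \<not> \<omega> e)" by (rule depends_onI) auto
  ultimately have "Pr (\<lambda>\<omega>. \<forall>e\<in>F. \<not> \<omega> e) = measure_pmf.prob (Pi_pmf F False p) (Pi F (\<lambda>_. {False}))"
    using Pr_depends_on[OF assms] by simp
  also have "\<dots> = (\<Prod>e\<in>F. measure_pmf.prob (p e) {False})"
    by (rule measure_Pi_pmf_Pi) (rule assms(1))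
  finally show ?thesis by (simp add: measure_pmf_single)
qed

text \<open>Fubini: condition on the edges of F, which decide A.\<close>

lemma Pr_conj_le_section_bound:
  assumes fin: "finite F" "finite G" and disj: "F \<inter> G = {}" and sub: "F \<subseteq> I" "G \<subseteq> I"
    and dA: "depends_on F A" and dB: "depends_on (F \<union> G) B"
    and b: "0 \<le> b" and bound: "\<And>\<omega>. A \<omega> \<Longrightarrow> Pr (\<lambda>\<omega>'. B (merge F \<omega> \<omega>')) \<le> b"
  shows "Pr (\<lambda>\<omega>. A \<omega> \<and> B \<omega>) \<le> b * Pr A"
proof -
  let ?X = "Pi_pmf F False p" and ?Y = "Pi_pmf G False p"
  let ?m = "\<lambda>(\<omega>, \<omega>'). merge F \<omega> \<omega>'"
  have A_merge: "A (merge F \<omega> \<omega>') = A \<omega>" for \<omega> \<omega>'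
    by (rule depends_onD[OF dA]) (simp add: merge_def)
  have Pr_section: "Pr (\<lambda>\<omega>'. B (merge F \<omega> \<omega>')) = measure_pmf.prob ?Y {\<omega>'. B (merge F \<omega> \<omega>')}" for \<omega>
  proof (rule Pr_depends_on[OF fin(2) sub(2)], rule depends_onI)
    fix \<omega>' \<omega>'' :: "'e \<Rightarrow> bool" assume "\<And>e. e \<in> G \<Longrightarrow> \<omega>' e = \<omega>'' e"
    thus "B (merge F \<omega> \<omega>') = B (merge F \<omega> \<omega>'')"
      by (intro depends_onD[OF dB]) (auto simp: merge_def)
  qed
  have "emeasure (measure_pmf (Pi_pmf (F \<union> G) False p)) {\<omega>. A \<omega> \<and> B \<omega>}
      = emeasure (measure_pmf (pair_pmf ?X ?Y)) (?m -` {\<omega>. A \<omega> \<and> B \<omega>})"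
    using Pi_pmf_union[OF fin disj, of False p] by (simp add: merge_def emeasure_map_pmf)
  also have "\<dots> = (\<integral>\<^sup>+ \<omega>. emeasure (measure_pmf ?Y) (Pair \<omega> -` (?m -` {\<omega>. A \<omega> \<and> B \<omega>})) \<partial>measure_pmf ?X)"
    by (rule emeasure_pair_pmf_section)
  also have "\<dots> \<le> (\<integral>\<^sup>+ \<omega>. ennreal b * indicator {\<omega>. A \<omega>} \<omega> \<partial>measure_pmf ?X)"
  proof (rule nn_integral_mono)
    fix \<omega>
    show "emeasure (measure_pmf ?Y) (Pair \<omega> -` (?m -` {\<omega>. A \<omega> \<and> B \<omega>})) \<le> ennreal b * indicator {\<omega>. A \<omega>} \<omega>"
    proof (cases "A \<omega>")
      case True
      hence "Pair \<omega> -` (?m -` {\<omega>. A \<omega> \<and> B \<omega>}) = {\<omega>'. B (merge F \<omega> \<omega>')}"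
        using A_merge by auto
      thus ?thesis using True bound[OF True] Pr_section[of \<omega>]
        by (simp add: measure_pmf.emeasure_eq_measure ennreal_leI)
    qed (simp add: A_merge)
  qed
  also have "\<dots> = ennreal b * emeasure (measure_pmf ?X) {\<omega>. A \<omega>}"
    by (simp add: nn_integral_cmult_indicator)
  also have "\<dots> = ennreal (b * measure_pmf.prob ?X {\<omega>. A \<omega>})"
    using b by (simp add: measure_pmf.emeasure_eq_measure ennreal_mult)
  finally have "measure_pmf.prob (Pi_pmf (F \<union> G) False p) {\<omega>. A \<omega> \<and> B \<omega>} \<le> b * measure_pmf.prob ?X {\<omega>. A \<omega>}"
    using b by (simp add: measure_pmf.emeasure_eq_measure)
  moreover have "depends_on (F \<union> G) (\<lambda>\<omega>. A \<omega> \<and> B \<omega>)"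
    using depends_on_mono[OF dA] dB unfolding depends_on_def by blast
  hence "Pr (\<lambda>\<omega>. A \<omega> \<and> B \<omega>) = measure_pmf.prob (Pi_pmf (F \<union> G) False p) {\<omega>. A \<omega> \<and> B \<omega>}"
    using Pr_depends_on fin sub by simp
  ultimately show ?thesis using Pr_depends_on[OF fin(1) sub(1) dA] by simp
qed

lemma Pr_conj_independent_le:
  assumes "finite F" "finite G" "F \<inter> G = {}" "F \<subseteq> I" "G \<subseteq> I"
    and dA: "depends_on F A" and dB: "depends_on G B"
  shows "Pr (\<lambda>\<omega>. A \<omega> \<and> B \<omega>) \<le> Pr A * Pr B"
proof -
  have "Pr (\<lambda>\<omega>. A \<omega> \<and> B \<omega>) \<le> Pr B * Pr A"
  proof (rule Pr_conj_le_section_bound[OF assms(1-5) dA depends_on_mono[OF dB]])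
    fix \<omega>
    have "B (merge F \<omega> \<omega>') = B \<omega>'" for \<omega>'
      by (rule depends_onD[OF dB]) (use assms(3) in \<open>auto simp: merge_def\<close>)
    thus "Pr (\<lambda>\<omega>'. B (merge F \<omega> \<omega>')) \<le> Pr B" by simp
  qed (auto simp: Pr_nonneg)
  thus ?thesis by (simp add: mult.commute)
qed

end

section \<open>Hierarchical blocks\<close>

lemma div_eq_imp_abs_diff_le:
  fixes a b m :: int
  assumes "0 < m" and "a div m = b div m"
  shows "\<bar>a - b\<bar> \<le> m - 1"
proof -
  have "a = m * (a div m) + a mod m" "b = m * (a div m) + b mod m"
    using assms(2) by (metis div_mult_mod_eq mult.commute)+
  moreover have "0 \<le> a mod m" "a mod m < m" "0 \<le> b mod m" "b mod m < m" using assms by simp_all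
  ultimately show ?thesis by linarith
qed

lemma linf_norm_vdiff_ge_1:
  assumes "length x = length y" and "x \<noteq> y"
  shows "1 \<le> linf_norm (vdiff x y)"
proof -
  have "\<exists>v\<in>set (vdiff x y). 1 \<le> \<bar>v\<bar>"
    using assms
  proof (induction x y rule: list_induct2)
    case (Cons a as b bs)
    have "a \<noteq> b \<Longrightarrow> 1 \<le> \<bar>a - b\<bar>" by linarith
    with Cons show ?case by (cases "a = b") (auto simp: vdiff_def)
  qed simp
  then obtain v where v: "v \<in> set (vdiff x y)" "1 \<le> \<bar>v\<bar>" ..
  have "\<bar>v\<bar> \<le> Max (insert 0 (abs ` set (vdiff x y)))" using v by (intro Max_ge) auto
  thus ?thesis unfolding linf_norm_def using v by linarith
qed

lemma card_div_preimage:
  assumes "0 < L"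
  shows "card {w. map (\<lambda>a. a div int L) w = z} = L ^ length z"
proof (induction z)
  case Nil
  have "{w. map (\<lambda>a. a div int L) w = []} = {[]}" by auto
  thus ?case by simp
next
  case (Cons b z)
  let ?W = "{w. map (\<lambda>a. a div int L) w = z}"
  have digits: "{a. a div int L = b} = {int L * b ..< int L * b + int L}"
  proof (intro equalityI subsetI)
    fix a assume "a \<in> {a. a div int L = b}"
    moreover have "a = int L * (a div int L) + a mod int L" "0 \<le> a mod int L" "a mod int L < int L"
      using assms by simp_all
    ultimately show "a \<in> {int L * b ..< int L * b + int L}" by auto
  next
    fix a assume "a \<in> {int L * b ..< int L * b + int L}"
    hence "a = int L * b + (a - int L * b)" "0 \<le> a - int L * b" "a - int L * b < int L" by auto
    hence "a div int L = b" by (rule int_div_pos_eq)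
    thus "a \<in> {a. a div int L = b}" by simp
  qed
  have "{w. map (\<lambda>a. a div int L) w = b # z} = (\<lambda>(a, w). a # w) ` ({a. a div int L = b} \<times> ?W)"
    by (auto simp: Cons_eq_map_conv image_iff)
  moreover have "inj_on (\<lambda>(a, w). a # w) ({a. a div int L = b} \<times> ?W)"
    by (auto simp: inj_on_def)
  ultimately have "card {w. map (\<lambda>a. a div int L) w = b # z} = card {a. a div int L = b} * card ?W"
    by (simp add: card_image card_cartesian_product)
  thus ?case using Cons.IH digits by simp
qed

locale blocks =
  fixes d L :: nat
  assumes L_pos: "0 < L"
begin

text \<open>block k z is the cube of side L^k with corner L^k z; the children of z index the L^d cubes
  of side L^k that make up block (k + 1) z.\<close>

definition block :: "nat \<Rightarrow> int list \<Rightarrow> int list set" where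
  "block k z = {x \<in> lattice d. map (\<lambda>a. a div int L ^ k) x = z}"

definition children :: "int list \<Rightarrow> int list set" where
  "children z = {w \<in> lattice d. map (\<lambda>a. a div int L) w = z}"

definition block_edges :: "nat \<Rightarrow> int list \<Rightarrow> int list set set" where
  "block_edges k z = {{x, y} | x y. x \<in> block k z \<and> y \<in> block k z \<and> x \<noteq> y}"

definition cross_edges :: "nat \<Rightarrow> int list \<Rightarrow> int list \<Rightarrow> int list set set" where
  "cross_edges k w w' = {{s, t} | s t. s \<in> block k w \<and> t \<in> block k w'}"

lemma block_lattice: "block k z \<subseteq> lattice d"
  unfolding block_def by auto

lemma children_lattice: "children z \<subseteq> lattice d"
  unfolding children_def by auto

lemma block_0: "z \<in> lattice d \<Longrightarrow> block 0 z = {z}"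
  unfolding block_def by auto

lemma block_Suc: "block (Suc k) z = (\<Union>w\<in>children z. block k w)"
proof -
  have div_Suc: "a div (int L * int L ^ k) = a div int L ^ k div int L" for a :: int
    by (metis mult.commute zdiv_zmult2_eq of_nat_0_le_iff zero_le_power)
  show ?thesis
  proof (intro equalityI subsetI)
    fix x assume x: "x \<in> block (Suc k) z"
    define w where "w = map (\<lambda>a. a div int L ^ k) x"
    have "w \<in> children z" "x \<in> block k w"
      using x unfolding w_def block_def children_def lattice_def by (auto simp: div_Suc)
    thus "x \<in> (\<Union>w\<in>children z. block k w)" by auto
  qed (auto simp: block_def children_def div_Suc)
qed

lemma block_subset_Suc: "w \<in> children z \<Longrightarrow> block k w \<subseteq> block (Suc k) z"
  using block_Suc by auto

lemma block_disjoint: "w \<noteq> w' \<Longrightarrow> block k w \<inter> block k w' = {}"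
  unfolding block_def by auto

lemma finite_block: "finite (block k z)"
proof -
  let ?m = "int L ^ k"
  have m: "0 < ?m" using L_pos by simp
  have "inj_on (map (\<lambda>a. a mod ?m)) (block k z)"
  proof (rule inj_onI)
    fix x y assume "x \<in> block k z" "y \<in> block k z" and mod: "map (\<lambda>a. a mod ?m) x = map (\<lambda>a. a mod ?m) y"
    hence div: "map (\<lambda>a. a div ?m) x = map (\<lambda>a. a div ?m) y" unfolding block_def by auto
    from mod have "length x = length y" by (metis length_map)
    thus "x = y" using mod div
    proof (induction x y rule: list_induct2)
      case (Cons a as b bs)
      have "a = ?m * (a div ?m) + a mod ?m" "b = ?m * (b div ?m) + b mod ?m" by simp_all
      with Cons show ?case by auto
    qed simp
  qed
  moreover have "map (\<lambda>a. a mod ?m) ` block k z \<subseteq> {xs. set xs \<subseteq> {0..<?m} \<and> length xs = d}"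
    using m unfolding block_def lattice_def by auto
  hence "finite (map (\<lambda>a. a mod ?m) ` block k z)"
    by (rule finite_subset) (rule finite_lists_length_eq, simp)
  ultimately show ?thesis by (rule finite_imageD[rotated])
qed

lemma linf_norm_vdiff_block:
  assumes "x \<in> block k z" and "y \<in> block k z"
  shows "linf_norm (vdiff x y) \<le> real L ^ k"
proof -
  let ?m = "int L ^ k"
  have m: "0 < ?m" using L_pos by simp
  have "length x = length y" using assms unfolding block_def lattice_def by auto
  moreover have "map (\<lambda>a. a div ?m) x = map (\<lambda>a. a div ?m) y" using assms unfolding block_def by auto
  ultimately have "\<forall>v\<in>set (vdiff x y). \<bar>v\<bar> \<le> ?m"
  proof (induction x y rule: list_induct2)
    case (Cons a as b bs)
    with div_eq_imp_abs_diff_le[OF m, of a b] show ?case by (auto simp: vdiff_def)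
  qed (simp add: vdiff_def)
  hence "Max (insert 0 (abs ` set (vdiff x y))) \<le> ?m"
    using m by (subst Max_le_iff) auto
  thus ?thesis unfolding linf_norm_def by (metis of_int_le_iff of_int_of_nat_eq of_int_power)
qed

lemma card_children: "z \<in> lattice d \<Longrightarrow> card (children z) = L ^ d"
proof -
  assume "z \<in> lattice d"
  hence "children z = {w. map (\<lambda>a. a div int L) w = z}" and "length z = d"
    unfolding children_def lattice_def by auto
  thus ?thesis using card_div_preimage[OF L_pos] by simp
qed

lemma finite_children: "z \<in> lattice d \<Longrightarrow> finite (children z)"
  using card_children L_pos by (metis card.infinite not_gr_zero zero_less_power)

lemma zero_in_children: "replicate d 0 \<in> children (replicate d 0)"
  unfolding children_def lattice_def by simp

lemma block_edges_lrp_edges: "block_edges k z \<subseteq> lrp_edges d"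
  unfolding block_edges_def lrp_edges_def using block_lattice by blast

lemma finite_block_edges: "finite (block_edges k z)"
proof -
  have "block_edges k z \<subseteq> (\<lambda>(x, y). {x, y}) ` (block k z \<times> block k z)"
    unfolding block_edges_def by auto
  thus ?thesis by (rule finite_subset) (simp add: finite_block)
qed

lemma block_edges_subset_Suc: "w \<in> children z \<Longrightarrow> block_edges k w \<subseteq> block_edges (Suc k) z"
  unfolding block_edges_def using block_subset_Suc by blast

lemma block_edges_disjoint: "w \<noteq> w' \<Longrightarrow> block_edges k w \<inter> block_edges k w' = {}"
  using block_disjoint unfolding block_edges_def by (fastforce simp: doubleton_eq_iff)

lemma finite_cross_edges: "finite (cross_edges k w w')"
proof -
  have "cross_edges k w w' = (\<lambda>(s, t). {s, t}) ` (block k w \<times> block k w')"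
    unfolding cross_edges_def by auto
  thus ?thesis using finite_block by simp
qed

lemma cross_edges_subset:
  assumes "w \<in> children z" "w' \<in> children z" "w \<noteq> w'"
  shows "cross_edges k w w' \<subseteq> block_edges (Suc k) z"
  using block_disjoint[OF assms(3)] block_subset_Suc[OF assms(1)] block_subset_Suc[OF assms(2)]
  unfolding cross_edges_def block_edges_def by blast

lemma cross_edges_disjoint:
  assumes "w \<noteq> w'"
  shows "(block_edges k w \<union> block_edges k w') \<inter> cross_edges k w w' = {}"
  using block_disjoint[OF assms]
  unfolding cross_edges_def block_edges_def by (fastforce simp: doubleton_eq_iff)


fun good :: "nat \<Rightarrow> int list \<Rightarrow> (int list set \<Rightarrow> bool) \<Rightarrow> bool"
  and giant :: "nat \<Rightarrow> int list \<Rightarrow> (int list set \<Rightarrow> bool) \<Rightarrow> int list set" where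
  "good 0 z \<omega> = True"
| "good (Suc k) z \<omega> =
     (\<forall>w\<in>children z. \<forall>w'\<in>children z. w \<noteq> w' \<longrightarrow>
        (good k w \<omega> \<or> good k w' \<omega>) \<and>
        (good k w \<omega> \<and> good k w' \<omega> \<longrightarrow> (\<exists>s\<in>giant k w \<omega>. \<exists>t\<in>giant k w' \<omega>. \<omega> {s, t})))"
| "giant 0 z \<omega> = {z}"
| "giant (Suc k) z \<omega> = (\<Union>w\<in>{w\<in>children z. good k w \<omega>}. giant k w \<omega>)"

lemma giant_subset_block: "z \<in> lattice d \<Longrightarrow> giant k z \<omega> \<subseteq> block k z"
proof (induction k arbitrary: z)
  case 0
  thus ?case by (simp add: block_0)
next
  case (Suc k)
  thus ?case using children_lattice block_subset_Suc by fastforce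
qed

lemma finite_giant: "z \<in> lattice d \<Longrightarrow> finite (giant k z \<omega>)"
  using giant_subset_block finite_block by (rule finite_subset)

lemma card_giant_ge:
  "z \<in> lattice d \<Longrightarrow> good k z \<omega> \<Longrightarrow> (L ^ d - 1) ^ k \<le> card (giant k z \<omega>)"
proof (induction k arbitrary: z)
  case 0
  thus ?case by simp
next
  case (Suc k)
  let ?G = "{w \<in> children z. good k w \<omega>}"
  have fin: "finite (children z)" using finite_children[OF Suc.prems(1)] .
  have "L ^ d - 1 \<le> card ?G"
  proof (cases "children z \<subseteq> ?G")
    case True
    hence "?G = children z" by auto
    thus ?thesis using card_children[OF Suc.prems(1)] by simp
  next
    case False
    then obtain w0 where w0: "w0 \<in> children z" "\<not> good k w0 \<omega>" by auto
    hence "children z - {w0} \<subseteq> ?G" using Suc.prems(2) by auto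
    hence "card (children z - {w0}) \<le> card ?G" using fin by (intro card_mono) auto
    thus ?thesis using card_children[OF Suc.prems(1)] w0(1) fin by (simp add: card_Diff_singleton)
  qed
  hence "(L ^ d - 1) * (L ^ d - 1) ^ k \<le> (\<Sum>w\<in>?G. (L ^ d - 1) ^ k)" by simp
  also have "\<dots> \<le> (\<Sum>w\<in>?G. card (giant k w \<omega>))"
    using Suc.IH children_lattice by (intro sum_mono) auto
  also have "\<dots> = card (giant (Suc k) z \<omega>)"
  proof -
    have "giant k w \<omega> \<inter> giant k w' \<omega> = {}" if "w \<in> children z" "w' \<in> children z" "w \<noteq> w'" for w w'
      using that giant_subset_block[of w k \<omega>] giant_subset_block[of w' k \<omega>] block_disjoint[of w w' k]
        children_lattice by blast
    hence "card (\<Union>w\<in>?G. giant k w \<omega>) = (\<Sum>w\<in>?G. card (giant k w \<omega>))"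
      using fin finite_giant subsetD[OF children_lattice] by (intro card_UN_disjoint) auto
    thus ?thesis by simp
  qed
  finally show ?case by simp
qed

lemma giant_connected:
  "z \<in> lattice d \<Longrightarrow> good k z \<omega> \<Longrightarrow> u \<in> giant k z \<omega> \<Longrightarrow> v \<in> giant k z \<omega> \<Longrightarrow>
   (open_adj d \<omega>)\<^sup>*\<^sup>* u v"
proof (induction k arbitrary: z u v)
  case 0
  thus ?case by simp
next
  case (Suc k)
  from Suc.prems(3) obtain w where w: "w \<in> children z" "good k w \<omega>" "u \<in> giant k w \<omega>" by auto
  from Suc.prems(4) obtain w' where w': "w' \<in> children z" "good k w' \<omega>" "v \<in> giant k w' \<omega>" by auto
  have wl: "w \<in> lattice d" "w' \<in> lattice d" using w(1) w'(1) children_lattice by auto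
  show ?case
  proof (cases "w = w'")
    case True
    thus ?thesis using Suc.IH[OF wl(1) w(2) w(3)] w'(3) by simp
  next
    case False
    with Suc.prems(2) w w' obtain s t where st: "s \<in> giant k w \<omega>" "t \<in> giant k w' \<omega>" "\<omega> {s, t}"
      by fastforce
    have "s \<in> block k w" "t \<in> block k w'" using st giant_subset_block wl by blast+
    hence "open_adj d \<omega> s t"
      using st(3) block_disjoint[OF False] block_lattice unfolding open_adj_def by blast
    moreover have "(open_adj d \<omega>)\<^sup>*\<^sup>* u s" "(open_adj d \<omega>)\<^sup>*\<^sup>* t v"
      using Suc.IH[OF wl(1) w(2) w(3) st(1)] Suc.IH[OF wl(2) w'(2) st(2) w'(3)] .
    ultimately show ?thesis by (meson rtranclp.rtrancl_into_rtrancl rtranclp_trans)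
  qed
qed

lemma good_giant_local:
  assumes "z \<in> lattice d" and "\<And>e. e \<in> block_edges k z \<Longrightarrow> \<omega> e = \<omega>' e"
  shows "good k z \<omega> = good k z \<omega>' \<and> giant k z \<omega> = giant k z \<omega>'"
  using assms
proof (induction k arbitrary: z)
  case 0
  thus ?case by simp
next
  case (Suc k)
  have IH: "good k w \<omega> = good k w \<omega>'" "giant k w \<omega> = giant k w \<omega>'" if "w \<in> children z" for w
    using Suc.IH[of w] that children_lattice block_edges_subset_Suc[OF that] Suc.prems(2) by blast+
  have edge: "\<omega> {s, t} = \<omega>' {s, t}"
    if "w \<in> children z" "w' \<in> children z" "w \<noteq> w'" "s \<in> giant k w \<omega>" "t \<in> giant k w' \<omega>" for w w' s t
  proof -
    have "s \<in> block k w" "t \<in> block k w'"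
      using that(1,2,4,5) giant_subset_block children_lattice by blast+
    hence "{s, t} \<in> cross_edges k w w'" unfolding cross_edges_def by blast
    thus ?thesis using cross_edges_subset[OF that(1-3)] Suc.prems(2) by blast
  qed
  have "good (Suc k) z \<omega> = good (Suc k) z \<omega>'"
    unfolding good.simps using IH edge by (auto 0 0)
  moreover have "giant (Suc k) z \<omega> = giant (Suc k) z \<omega>'"
    using IH by auto
  ultimately show ?case ..
qed

lemma zero_in_giant:
  "(\<And>j. good j (replicate d 0) \<omega>) \<Longrightarrow> replicate d 0 \<in> giant k (replicate d 0) \<omega>"
  by (induction k) (use zero_in_children in auto)

lemma infinite_cluster_if_good:
  assumes "3 \<le> L ^ d" and "\<And>k. good k (replicate d 0) \<omega>"
  shows "infinite (cluster d \<omega> (replicate d 0))"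
proof
  let ?z = "replicate d 0"
  have z: "?z \<in> lattice d" unfolding lattice_def by simp
  assume fin: "finite (cluster d \<omega> ?z)"
  have sub: "giant k ?z \<omega> \<subseteq> cluster d \<omega> ?z" for k
    using giant_connected[OF z assms(2) zero_in_giant[OF assms(2)]] unfolding cluster_def by auto
  define k where "k = card (cluster d \<omega> ?z)"
  have "2 ^ k \<le> (L ^ d - 1) ^ k" using assms(1) by (intro power_mono) auto
  also have "\<dots> \<le> card (giant k ?z \<omega>)" using card_giant_ge[OF z assms(2)] .
  also have "\<dots> \<le> k" unfolding k_def using sub fin by (intro card_mono)
  finally show False using less_exp[of k] by simp
qed

end

section \<open>Long-range percolation estimates\<close>

lemma eight_le_power_of_scale:
  fixes L d :: nat and \<alpha> :: real
  assumes "1 \<le> L" and "0 < \<alpha>" and "8 \<le> real L powr (real d - \<alpha>)"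
  shows "8 \<le> real L ^ d"
proof -
  have "real L powr (real d - \<alpha>) \<le> real L powr real d"
    using assms(1,2) by (intro powr_mono) auto
  thus ?thesis using assms by (simp add: powr_realpow)
qed

lemma block_weight_growth:
  fixes L d :: nat and \<alpha> :: real
  assumes L: "1 \<le> L" and \<alpha>: "0 < \<alpha>" and scale: "8 \<le> real L powr (real d - \<alpha>)"
  shows "real L powr (- real d - \<alpha>) * 2 ^ k
           \<le> (real L ^ Suc k) powr (- real d - \<alpha>) * (real ((L ^ d - 1) ^ k))\<^sup>2"
proof -
  let ?x = "real L powr (- real d - \<alpha>)" and ?N = "real L ^ d"
  have x: "0 < ?x" using L by simp
  have N: "?N = real L powr real d" using L by (simp add: powr_realpow)
  have "8 \<le> ?N" using eight_le_power_of_scale[OF L \<alpha> scale] .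
  hence "8 * ?N \<le> ?N * ?N" by (intro mult_right_mono) auto
  hence N_sq: "?N\<^sup>2 \<le> 4 * (?N - 1)\<^sup>2"
    using \<open>8 \<le> ?N\<close> by (simp add: power2_eq_square algebra_simps)
  have "?x * ?N\<^sup>2 = real L powr (real d - \<alpha>)"
    unfolding N using L by (simp add: powr_realpow[symmetric] powr_add[symmetric] power2_eq_square)
  moreover have "?x * ?N\<^sup>2 \<le> ?x * (4 * (?N - 1)\<^sup>2)"
    using N_sq x by (intro mult_left_mono) auto
  ultimately have "2 \<le> ?x * (?N - 1)\<^sup>2"
    using scale by linarith
  hence "?x * 2 ^ k \<le> ?x * (?x * (?N - 1)\<^sup>2) ^ k"
    using x by (intro mult_left_mono power_mono) auto
  also have "\<dots> = ?x ^ Suc k * ((?N - 1) ^ k)\<^sup>2"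
    by (simp add: power_mult_distrib flip: power_mult) (simp add: mult.commute)
  also have "?x ^ Suc k = (real L ^ Suc k) powr (- real d - \<alpha>)"
    by (induction k) (simp_all add: powr_mult)
  also have "(?N - 1) ^ k = real ((L ^ d - 1) ^ k)"
    using L by (simp add: of_nat_diff)
  finally show ?thesis .
qed

lemma infinite_iff_unbounded_to_nat:
  "infinite (A :: 'a :: countable set) \<longleftrightarrow> (\<forall>m. \<exists>y\<in>A. m \<le> to_nat y)"
proof
  assume "infinite A"
  moreover have "finite {y :: 'a. to_nat y < m}" for m
    using finite_vimageI[of "{..<m}" to_nat] by (simp add: lessThan_def inj_to_nat)
  ultimately show "\<forall>m. \<exists>y\<in>A. m \<le> to_nat y"
  proof (intro allI)
    fix m
    from \<open>infinite A\<close> have "\<not> A \<subseteq> {y. to_nat y < m}"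
      using \<open>finite {y. to_nat y < m}\<close> finite_subset by blast
    thus "\<exists>y\<in>A. m \<le> to_nat y" by (auto simp: not_less)
  qed
next
  assume unbounded: "\<forall>m. \<exists>y\<in>A. m \<le> to_nat y"
  show "infinite A"
  proof
    assume "finite A"
    then obtain y where "y \<in> A" "Suc (Max (to_nat ` A)) \<le> to_nat y" using unbounded by blast
    thus False using Max_ge[OF finite_imageI[OF \<open>finite A\<close>] imageI, of y to_nat] by simp
  qed
qed

locale lrp = blocks d L for d L +
  fixes J :: "int list \<Rightarrow> int list \<Rightarrow> real" and \<beta> c \<alpha> :: real
  assumes J_sym: "\<forall>x\<in>lattice d. \<forall>y\<in>lattice d. J x y = J y x"
    and J_lower: "\<forall>x\<in>lattice d. \<forall>y\<in>lattice d. x \<noteq> y \<longrightarrow>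
                    c * linf_norm (vdiff x y) powr (- real d - \<alpha>) \<le> J x y"
    and \<beta>_nonneg: "0 \<le> \<beta>" and c_pos: "0 < c" and \<alpha>_pos: "0 < \<alpha>"
begin

definition edge_law :: "int list set \<Rightarrow> bool pmf" where
  "edge_law e = bernoulli_pmf (1 - exp (- \<beta> * edge_weight J e))"

sublocale E: edge_product "lrp_edges d" edge_law .

lemma Pm_eq_lrp_measure: "E.Pm = lrp_measure d J \<beta>"
  unfolding E.Pm_def lrp_measure_def edge_law_def ..

lemma edge_weight_doubleton:
  assumes "s \<in> lattice d" "t \<in> lattice d"
  shows "edge_weight J {s, t} = J s t"
  unfolding edge_weight_def
proof (rule the_equality)
  fix w assume "\<exists>x y. {s, t} = {x, y} \<and> w = J x y"
  thus "w = J s t" using J_sym assms by (auto simp: doubleton_eq_iff)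
qed blast

lemma J_ge_block:
  assumes "s \<in> block m z" "t \<in> block m z" "s \<noteq> t"
  shows "c * (real L ^ m) powr (- real d - \<alpha>) \<le> J s t"
proof -
  have st: "s \<in> lattice d" "t \<in> lattice d" using assms block_lattice by blast+
  have "1 \<le> linf_norm (vdiff s t)"
    using linf_norm_vdiff_ge_1[OF _ assms(3)] st unfolding lattice_def by simp
  hence "(real L ^ m) powr (- real d - \<alpha>) \<le> linf_norm (vdiff s t) powr (- real d - \<alpha>)"
    using linf_norm_vdiff_block[OF assms(1,2)] \<alpha>_pos by (intro powr_mono2') auto
  thus ?thesis using c_pos J_lower st assms(3) by (meson mult_left_mono less_imp_le order_trans)
qed

lemma pmf_edge_closed:
  assumes "s \<in> lattice d" "t \<in> lattice d" "s \<noteq> t"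
  shows "pmf (edge_law {s, t}) False = exp (- \<beta> * J s t)"
proof -
  have "0 \<le> c * linf_norm (vdiff s t) powr (- real d - \<alpha>)" using c_pos by simp
  hence "0 \<le> J s t" using J_lower assms by fastforce
  hence "exp (- \<beta> * J s t) \<le> 1" using \<beta>_nonneg by simp
  thus ?thesis unfolding edge_law_def edge_weight_doubleton[OF assms(1,2)] by simp
qed

lemma depends_on_block_edges:
  "z \<in> lattice d \<Longrightarrow> E.depends_on (block_edges k z) (\<lambda>\<omega>. P (good k z \<omega>) (giant k z \<omega>))"
proof (rule E.depends_onI)
  fix \<omega> \<omega>' :: "int list set \<Rightarrow> bool"
  assume "z \<in> lattice d" "\<And>e. e \<in> block_edges k z \<Longrightarrow> \<omega> e = \<omega>' e"
  from good_giant_local[OF this] show "P (good k z \<omega>) (giant k z \<omega>) = P (good k z \<omega>') (giant k z \<omega>')"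
    by simp
qed

lemma sets_block_event:
  "E.depends_on (block_edges k z) Q \<Longrightarrow> {\<omega> \<in> space E.Pm. Q \<omega>} \<in> sets E.Pm"
  by (rule E.sets_depends_on[OF finite_block_edges block_edges_lrp_edges])

lemma Pr_no_edge_between:
  assumes "S \<subseteq> block m z" "T \<subseteq> block m z" "S \<inter> T = {}"
  shows "E.Pr (\<lambda>\<omega>. \<forall>s\<in>S. \<forall>t\<in>T. \<not> \<omega> {s, t})
           \<le> exp (- \<beta> * (c * (real L ^ m) powr (- real d - \<alpha>)) * (real (card S) * real (card T)))"
proof -
  let ?C = "(\<lambda>(s, t). {s, t}) ` (S \<times> T)"
  have fin: "finite S" "finite T" using assms finite_block finite_subset by metis+
  have lat: "s \<in> lattice d" "t \<in> lattice d" "s \<noteq> t" if "s \<in> S" "t \<in> T" for s t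
    using that assms block_lattice by blast+
  have "?C \<subseteq> lrp_edges d"
    unfolding lrp_edges_def by (auto dest: lat)
  hence "E.Pr (\<lambda>\<omega>. \<forall>e\<in>?C. \<not> \<omega> e) = (\<Prod>e\<in>?C. pmf (edge_law e) False)"
    using fin by (intro E.Pr_all_closed) auto
  moreover have "(\<lambda>\<omega>. \<forall>e\<in>?C. \<not> \<omega> e) = (\<lambda>\<omega>. \<forall>s\<in>S. \<forall>t\<in>T. \<not> \<omega> {s, t})" by auto
  ultimately have "E.Pr (\<lambda>\<omega>. \<forall>s\<in>S. \<forall>t\<in>T. \<not> \<omega> {s, t}) = (\<Prod>e\<in>?C. pmf (edge_law e) False)"
    by simp
  also have "\<dots> = (\<Prod>(s, t)\<in>S \<times> T. exp (- \<beta> * J s t))"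
  proof -
    have "inj_on (\<lambda>(s, t). {s, t}) (S \<times> T)"
      using assms(3) by (auto simp: inj_on_def doubleton_eq_iff)
    hence "(\<Prod>e\<in>?C. pmf (edge_law e) False) = (\<Prod>(s, t)\<in>S \<times> T. pmf (edge_law {s, t}) False)"
      by (simp add: prod.reindex case_prod_unfold)
    also have "\<dots> = (\<Prod>(s, t)\<in>S \<times> T. exp (- \<beta> * J s t))"
      by (rule prod.cong) (auto simp: lat pmf_edge_closed)
    finally show ?thesis .
  qed
  also have "\<dots> = exp (- \<beta> * (\<Sum>(s, t)\<in>S \<times> T. J s t))"
    using fin by (simp add: exp_sum sum_distrib_left case_prod_unfold)
  also have "\<dots> \<le> exp (- \<beta> * (\<Sum>(s, t)\<in>S \<times> T. c * (real L ^ m) powr (- real d - \<alpha>)))"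
  proof -
    have "(\<Sum>(s, t)\<in>S \<times> T. c * (real L ^ m) powr (- real d - \<alpha>)) \<le> (\<Sum>(s, t)\<in>S \<times> T. J s t)"
      using assms by (intro sum_mono) (auto intro!: J_ge_block)
    thus ?thesis using \<beta>_nonneg by (simp add: mult_left_mono)
  qed
  finally show ?thesis by (simp add: card_cartesian_product mult_ac)
qed

lemma depends_on_joined:
  assumes "w \<in> lattice d" "w' \<in> lattice d"
  shows "E.depends_on (block_edges k w \<union> block_edges k w' \<union> cross_edges k w w')
           (\<lambda>\<omega>. P (good k w \<omega>) (good k w' \<omega>) (\<exists>s\<in>giant k w \<omega>. \<exists>t\<in>giant k w' \<omega>. \<omega> {s, t}))"
proof (rule E.depends_onI)
  fix \<omega> \<omega>' :: "int list set \<Rightarrow> bool"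
  assume eq: "\<And>e. e \<in> block_edges k w \<union> block_edges k w' \<union> cross_edges k w w' \<Longrightarrow> \<omega> e = \<omega>' e"
  have w: "good k w \<omega> = good k w \<omega>'" "giant k w \<omega> = giant k w \<omega>'"
    using good_giant_local[OF assms(1), of k \<omega> \<omega>'] eq by blast+
  have w': "good k w' \<omega> = good k w' \<omega>'" "giant k w' \<omega> = giant k w' \<omega>'"
    using good_giant_local[OF assms(2), of k \<omega> \<omega>'] eq by blast+
  have "\<omega> {s, t} = \<omega>' {s, t}" if "s \<in> giant k w \<omega>" "t \<in> giant k w' \<omega>" for s t
    using that giant_subset_block assms eq unfolding cross_edges_def by blast
  hence "(\<exists>s\<in>giant k w \<omega>. \<exists>t\<in>giant k w' \<omega>. \<omega> {s, t}) =
         (\<exists>s\<in>giant k w \<omega>'. \<exists>t\<in>giant k w' \<omega>'. \<omega>' {s, t})"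
    unfolding w(2) w'(2) by auto
  thus "P (good k w \<omega>) (good k w' \<omega>) (\<exists>s\<in>giant k w \<omega>. \<exists>t\<in>giant k w' \<omega>. \<omega> {s, t}) =
        P (good k w \<omega>') (good k w' \<omega>') (\<exists>s\<in>giant k w \<omega>'. \<exists>t\<in>giant k w' \<omega>'. \<omega>' {s, t})"
    by (simp add: w(1) w'(1))
qed

lemma sets_children_event:
  assumes "w \<in> children z" "w' \<in> children z" "w \<noteq> w'"
    and "E.depends_on (block_edges k w \<union> block_edges k w' \<union> cross_edges k w w') Q"
  shows "{\<omega> \<in> space E.Pm. Q \<omega>} \<in> sets E.Pm"
proof (rule E.sets_depends_on[OF _ _ assms(4)])
  show "finite (block_edges k w \<union> block_edges k w' \<union> cross_edges k w w')"
    by (simp add: finite_block_edges finite_cross_edges)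
  show "block_edges k w \<union> block_edges k w' \<union> cross_edges k w w' \<subseteq> lrp_edges d"
    using block_edges_lrp_edges cross_edges_subset[OF assms(1-3)] by blast
qed

lemma Pr_both_bad_le:
  assumes "w \<in> lattice d" "w' \<in> lattice d" "w \<noteq> w'"
    and "E.Pr (\<lambda>\<omega>. \<not> good k w \<omega>) \<le> q" "E.Pr (\<lambda>\<omega>. \<not> good k w' \<omega>) \<le> q"
  shows "E.Pr (\<lambda>\<omega>. \<not> good k w \<omega> \<and> \<not> good k w' \<omega>) \<le> q * q"
proof -
  have "E.Pr (\<lambda>\<omega>. \<not> good k w \<omega> \<and> \<not> good k w' \<omega>)
      \<le> E.Pr (\<lambda>\<omega>. \<not> good k w \<omega>) * E.Pr (\<lambda>\<omega>. \<not> good k w' \<omega>)"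
    using assms(1,2) depends_on_block_edges[of _ k "\<lambda>g _. \<not> g"]
    by (intro E.Pr_conj_independent_le[OF finite_block_edges finite_block_edges
          block_edges_disjoint[OF assms(3)] block_edges_lrp_edges block_edges_lrp_edges]) auto
  also have "\<dots> \<le> q * q"
    using assms(4,5) E.Pr_nonneg by (intro mult_mono) (auto intro: order_trans)
  finally show ?thesis .
qed

definition unjoined_bound :: "nat \<Rightarrow> real" where
  "unjoined_bound k =
     exp (- \<beta> * (c * (real L ^ Suc k) powr (- real d - \<alpha>)) * (real ((L ^ d - 1) ^ k))\<^sup>2)"

lemma Pr_no_edge_between_giants:
  assumes w: "w \<in> children z" "w' \<in> children z" "w \<noteq> w'"
    and good: "good k w \<omega>" "good k w' \<omega>"
  shows "E.Pr (\<lambda>\<omega>'. \<forall>s\<in>giant k w \<omega>. \<forall>t\<in>giant k w' \<omega>. \<not> \<omega>' {s, t}) \<le> unjoined_bound k"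
proof -
  let ?S = "giant k w \<omega>" and ?T = "giant k w' \<omega>"
  have wl: "w \<in> lattice d" "w' \<in> lattice d" using w children_lattice by blast+
  have ST: "?S \<subseteq> block (Suc k) z" "?T \<subseteq> block (Suc k) z" "?S \<inter> ?T = {}"
    using giant_subset_block[OF wl(1)] giant_subset_block[OF wl(2)] block_subset_Suc[OF w(1)]
      block_subset_Suc[OF w(2)] block_disjoint[OF w(3)] by blast+
  have "real ((L ^ d - 1) ^ k) \<le> real (card ?S)" "real ((L ^ d - 1) ^ k) \<le> real (card ?T)"
    using card_giant_ge wl good by auto
  hence "(real ((L ^ d - 1) ^ k))\<^sup>2 \<le> real (card ?S) * real (card ?T)"
    unfolding power2_eq_square by (intro mult_mono) auto
  hence "\<beta> * (c * (real L ^ Suc k) powr (- real d - \<alpha>)) * (real ((L ^ d - 1) ^ k))\<^sup>2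
      \<le> \<beta> * (c * (real L ^ Suc k) powr (- real d - \<alpha>)) * (real (card ?S) * real (card ?T))"
    using \<beta>_nonneg c_pos by (intro mult_left_mono) auto
  hence "exp (- \<beta> * (c * (real L ^ Suc k) powr (- real d - \<alpha>)) * (real (card ?S) * real (card ?T)))
      \<le> unjoined_bound k"
    unfolding unjoined_bound_def by simp
  thus ?thesis using Pr_no_edge_between[OF ST] by linarith
qed

lemma Pr_unjoined_le:
  assumes w: "w \<in> children z" "w' \<in> children z" "w \<noteq> w'"
  shows "E.Pr (\<lambda>\<omega>. (good k w \<omega> \<and> good k w' \<omega>) \<and> \<not> (\<exists>s\<in>giant k w \<omega>. \<exists>t\<in>giant k w' \<omega>. \<omega> {s, t}))
           \<le> unjoined_bound k"
proof -
  let ?F = "block_edges k w \<union> block_edges k w'" and ?G = "cross_edges k w w'"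
  have wl: "w \<in> lattice d" "w' \<in> lattice d" using w children_lattice by blast+
  have "E.Pr (\<lambda>\<omega>. (good k w \<omega> \<and> good k w' \<omega>) \<and> \<not> (\<exists>s\<in>giant k w \<omega>. \<exists>t\<in>giant k w' \<omega>. \<omega> {s, t}))
      \<le> unjoined_bound k * E.Pr (\<lambda>\<omega>. good k w \<omega> \<and> good k w' \<omega>)"
  proof (rule E.Pr_conj_le_section_bound)
    show "E.depends_on ?F (\<lambda>\<omega>. good k w \<omega> \<and> good k w' \<omega>)"
      by (rule E.depends_onI) (metis good_giant_local wl UnCI)
    show "E.depends_on (?F \<union> ?G) (\<lambda>\<omega>. \<not> (\<exists>s\<in>giant k w \<omega>. \<exists>t\<in>giant k w' \<omega>. \<omega> {s, t}))"
      using depends_on_joined[OF wl, of k "\<lambda>_ _ j. \<not> j"] by simp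
    fix \<omega> assume good: "good k w \<omega> \<and> good k w' \<omega>"
    have frozen: "giant k v (E.merge ?F \<omega> \<omega>') = giant k v \<omega>" if "v \<in> {w, w'}" for v \<omega>'
      using that wl by (intro good_giant_local[THEN conjunct2]) (auto simp: E.merge_def)
    have "{s, t} \<notin> ?F" if "s \<in> giant k w \<omega>" "t \<in> giant k w' \<omega>" for s t
      using that cross_edges_disjoint[OF w(3)] giant_subset_block wl
      unfolding cross_edges_def by blast
    hence "(\<lambda>\<omega>'. \<not> (\<exists>s\<in>giant k w (E.merge ?F \<omega> \<omega>'). \<exists>t\<in>giant k w' (E.merge ?F \<omega> \<omega>').
               E.merge ?F \<omega> \<omega>' {s, t}))
         = (\<lambda>\<omega>'. \<forall>s\<in>giant k w \<omega>. \<forall>t\<in>giant k w' \<omega>. \<not> \<omega>' {s, t})"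
      using frozen by (auto simp: E.merge_def)
    thus "E.Pr (\<lambda>\<omega>'. \<not> (\<exists>s\<in>giant k w (E.merge ?F \<omega> \<omega>'). \<exists>t\<in>giant k w' (E.merge ?F \<omega> \<omega>').
               E.merge ?F \<omega> \<omega>' {s, t})) \<le> unjoined_bound k"
      using Pr_no_edge_between_giants[OF w] good by simp
  qed (use finite_block_edges finite_cross_edges block_edges_lrp_edges cross_edges_subset[OF w]
         cross_edges_disjoint[OF w(3)] in \<open>auto simp: unjoined_bound_def, blast\<close>)
  also have "\<dots> \<le> unjoined_bound k"
    using E.Pr_le_1 by (simp add: unjoined_bound_def mult_left_le)
  finally show ?thesis .
qed

lemma Pr_bad_Suc_le:
  assumes z: "z \<in> lattice d" and q: "\<And>w. w \<in> lattice d \<Longrightarrow> E.Pr (\<lambda>\<omega>. \<not> good k w \<omega>) \<le> q"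
  shows "E.Pr (\<lambda>\<omega>. \<not> good (Suc k) z \<omega>) \<le> real (L ^ d) ^ 2 * (q * q + unjoined_bound k)"
proof -
  define T where "T = {(w, w') \<in> children z \<times> children z. w \<noteq> w'}"
  define both_bad where "both_bad = (\<lambda>(w, w') \<omega>. \<not> good k w \<omega> \<and> \<not> good k w' \<omega>)"
  define unjoined where "unjoined = (\<lambda>(w, w') \<omega>. (good k w \<omega> \<and> good k w' \<omega>) \<and>
                                       \<not> (\<exists>s\<in>giant k w \<omega>. \<exists>t\<in>giant k w' \<omega>. \<omega> {s, t}))"
  have T: "w \<in> children z" "w' \<in> children z" "w \<noteq> w'" "w \<in> lattice d" "w' \<in> lattice d"
    if "(w, w') \<in> T" for w w'
    using that children_lattice unfolding T_def by auto
  have sets_pair: "{\<omega> \<in> space E.Pm. P (good k w \<omega>) (good k w' \<omega>)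
                     (\<exists>s\<in>giant k w \<omega>. \<exists>t\<in>giant k w' \<omega>. \<omega> {s, t})} \<in> sets E.Pm"
    if "(w, w') \<in> T" for w w' P
    using sets_children_event[OF T(1-3)[OF that] depends_on_joined[OF T(4,5)[OF that]]] .
  have sets: "{\<omega> \<in> space E.Pm. both_bad (w, w') \<omega>} \<in> sets E.Pm"
             "{\<omega> \<in> space E.Pm. unjoined (w, w') \<omega>} \<in> sets E.Pm"
             "{\<omega> \<in> space E.Pm. both_bad (w, w') \<omega> \<or> unjoined (w, w') \<omega>} \<in> sets E.Pm"
    if "(w, w') \<in> T" for w w'
    using sets_pair[OF that, of "\<lambda>g g' _. \<not> g \<and> \<not> g'"] sets_pair[OF that, of "\<lambda>g g' j. (g \<and> g') \<and> \<not> j"]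
      sets_pair[OF that, of "\<lambda>g g' j. \<not> g \<and> \<not> g' \<or> (g \<and> g') \<and> \<not> j"]
    unfolding both_bad_def unjoined_def by simp_all
  have "(\<lambda>\<omega>. \<not> good (Suc k) z \<omega>) = (\<lambda>\<omega>. \<exists>p\<in>T. both_bad p \<omega> \<or> unjoined p \<omega>)"
    unfolding T_def both_bad_def unjoined_def by (auto simp: fun_eq_iff)
  moreover have "finite T"
    using finite_children[OF z] unfolding T_def by (auto intro: finite_subset[of _ "children z \<times> children z"])
  ultimately have "E.Pr (\<lambda>\<omega>. \<not> good (Suc k) z \<omega>) \<le> (\<Sum>p\<in>T. E.Pr (\<lambda>\<omega>. both_bad p \<omega> \<or> unjoined p \<omega>))"
    using E.Pr_Bex_le[of T "\<lambda>p \<omega>. both_bad p \<omega> \<or> unjoined p \<omega>"] sets(3) by fastforce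
  also have "\<dots> \<le> (\<Sum>p\<in>T. q * q + unjoined_bound k)"
  proof (rule sum_mono)
    fix p assume "p \<in> T"
    then obtain w w' where p: "p = (w, w')" "(w, w') \<in> T" by (cases p) auto
    have "E.Pr (\<lambda>\<omega>. both_bad p \<omega> \<or> unjoined p \<omega>) \<le> E.Pr (both_bad p) + E.Pr (unjoined p)"
      unfolding p(1) by (rule E.Pr_disj_le[OF sets(1,2)[OF p(2)]])
    also have "\<dots> \<le> q * q + unjoined_bound k"
      using Pr_both_bad_le[OF T(4,5,3)[OF p(2)] q q] Pr_unjoined_le[OF T(1-3)[OF p(2)], of k] T(4,5)[OF p(2)]
      unfolding both_bad_def unjoined_def p(1) by (simp add: add_mono)
    finally show "E.Pr (\<lambda>\<omega>. both_bad p \<omega> \<or> unjoined p \<omega>) \<le> q * q + unjoined_bound k" .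
  qed
  also have "\<dots> \<le> real (L ^ d) ^ 2 * (q * q + unjoined_bound k)"
  proof -
    have "card T \<le> card (children z \<times> children z)"
      using finite_children[OF z] unfolding T_def by (intro card_mono) auto
    hence "real (card T) \<le> real (L ^ d) ^ 2"
      using card_children[OF z] by (simp add: card_cartesian_product power2_eq_square)
        (metis of_nat_le_iff of_nat_mult of_nat_power)
    moreover have "0 \<le> q * q + unjoined_bound k" by (simp add: unjoined_bound_def)
    ultimately show ?thesis by (simp add: mult_right_mono)
  qed
  finally show ?thesis .
qed

lemma unjoined_bound_le:
  assumes scale: "8 \<le> real L powr (real d - \<alpha>)"
  shows "unjoined_bound k \<le> exp (- \<beta> * c * real L powr (- real d - \<alpha>)) ^ Suc k"
proof -
  let ?t = "\<beta> * c * real L powr (- real d - \<alpha>)"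
  have t: "0 \<le> ?t" using \<beta>_nonneg c_pos by simp
  have "?t * real (Suc k) \<le> ?t * 2 ^ k"
    using t by (intro mult_left_mono) (simp_all add: of_nat_less_two_power Suc_le_eq flip: of_nat_Suc)
  also have "\<dots> \<le> \<beta> * c * ((real L ^ Suc k) powr (- real d - \<alpha>) * (real ((L ^ d - 1) ^ k))\<^sup>2)"
    using block_weight_growth[OF _ \<alpha>_pos scale, of k] L_pos \<beta>_nonneg c_pos
    by (simp add: mult.assoc mult_left_mono)
  finally have "exp (- \<beta> * (c * (real L ^ Suc k) powr (- real d - \<alpha>)) * (real ((L ^ d - 1) ^ k))\<^sup>2)
      \<le> exp (real (Suc k) * - ?t)"
    by (simp add: mult_ac)
  thus ?thesis unfolding unjoined_bound_def exp_of_nat_mult by simp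
qed

lemma Pr_bad_le:
  assumes scale: "8 \<le> real L powr (real d - \<alpha>)"
    and small: "exp (- \<beta> * c * real L powr (- real d - \<alpha>)) \<le> 1 / (16 * real (L ^ d) ^ 4)"
    and z: "z \<in> lattice d"
  shows "E.Pr (\<lambda>\<omega>. \<not> good k z \<omega>) \<le> 1 / (4 * real (L ^ d) ^ 2 * 2 ^ k)"
  using z
proof (induction k arbitrary: z)
  case 0
  thus ?case by (simp add: E.Pr_def)
next
  case (Suc k)
  let ?N = "real (L ^ d)" and ?x = "exp (- \<beta> * c * real L powr (- real d - \<alpha>))"
  let ?q = "1 / (4 * ?N ^ 2 * 2 ^ k)" and ?y = "1 / (16 * ?N ^ 2 * 2 ^ k)"
  have N: "1 \<le> ?N" using L_pos by simp
  have "?x \<le> 1 / 2" using small N by (smt (verit) frac_le one_le_power)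
  hence "?x * ?x ^ k \<le> 1 / (16 * ?N ^ 4) * (1 / 2) ^ k"
    using small by (intro mult_mono power_mono) auto
  hence "unjoined_bound k \<le> 1 / (16 * ?N ^ 4) * (1 / 2) ^ k"
    using unjoined_bound_le[OF scale, of k] by simp
  hence "?N ^ 2 * unjoined_bound k \<le> ?N ^ 2 * (1 / (16 * ?N ^ 4) * (1 / 2) ^ k)"
    by (rule mult_left_mono) simp
  also have "\<dots> = ?y"
    using N by (simp add: field_simps power_one_over eval_nat_numeral)
  finally have unjoined: "?N ^ 2 * unjoined_bound k \<le> ?y" .
  have "?N ^ 2 * (?q * ?q) = ?y / 2 ^ k"
    using N by (simp add: field_simps eval_nat_numeral)
  also have "\<dots> \<le> ?y / 1"
    by (intro divide_left_mono) simp_all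
  finally have both_bad: "?N ^ 2 * (?q * ?q) \<le> ?y" by simp
  have "E.Pr (\<lambda>\<omega>. \<not> good (Suc k) z \<omega>) \<le> ?N ^ 2 * (?q * ?q + unjoined_bound k)"
    using Pr_bad_Suc_le[OF Suc.prems Suc.IH] .
  also have "\<dots> = ?N ^ 2 * (?q * ?q) + ?N ^ 2 * unjoined_bound k"
    by (rule distrib_left)
  also have "\<dots> \<le> ?y + ?y"
    using both_bad unjoined by (rule add_mono)
  also have "\<dots> = 1 / (4 * ?N ^ 2 * 2 ^ Suc k)"
    by simp
  finally show ?case .
qed

lemma sets_open_adj: "{\<omega> \<in> space E.Pm. open_adj d \<omega> x y} \<in> sets E.Pm"
proof (cases "x \<in> lattice d \<and> y \<in> lattice d \<and> x \<noteq> y")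
  case True
  hence "{x, y} \<in> lrp_edges d" unfolding lrp_edges_def by blast
  hence "{\<omega> \<in> space E.Pm. \<omega> {x, y}} \<in> sets E.Pm"
    by (intro E.sets_depends_on[of "{{x, y}}"]) (auto intro: E.depends_onI)
  thus ?thesis using True unfolding open_adj_def by simp
qed (auto simp: open_adj_def)

lemma sets_connected: "{\<omega> \<in> space E.Pm. (open_adj d \<omega>)\<^sup>*\<^sup>* x y} \<in> sets E.Pm"
proof -
  have "{\<omega> \<in> space E.Pm. (open_adj d \<omega> ^^ n) x y} \<in> sets E.Pm" for n
  proof (induction n arbitrary: y)
    case 0
    show ?case by (cases "x = y") auto
  next
    case (Suc n)
    have "{\<omega> \<in> space E.Pm. (open_adj d \<omega> ^^ Suc n) x y}
        = (\<Union>v. {\<omega> \<in> space E.Pm. (open_adj d \<omega> ^^ n) x v} \<inter> {\<omega> \<in> space E.Pm. open_adj d \<omega> v y})"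
      by auto
    thus ?case using Suc.IH sets_open_adj by auto
  qed
  moreover have "{\<omega> \<in> space E.Pm. (open_adj d \<omega>)\<^sup>*\<^sup>* x y}
      = (\<Union>n. {\<omega> \<in> space E.Pm. (open_adj d \<omega> ^^ n) x y})"
    by (auto simp: rtranclp_power)
  ultimately show ?thesis by auto
qed

lemma sets_infinite_cluster_event: "infinite_cluster_event d J \<beta> \<in> sets E.Pm"
proof -
  have "infinite_cluster_event d J \<beta>
      = (\<Union>x\<in>lattice d. \<Inter>m. \<Union>y. {\<omega> \<in> space E.Pm. (open_adj d \<omega>)\<^sup>*\<^sup>* x y \<and> m \<le> to_nat y})"
    unfolding infinite_cluster_event_def Pm_eq_lrp_measure[symmetric] cluster_def
    by (auto simp: infinite_iff_unbounded_to_nat; blast)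
  also have "\<dots> \<in> sets E.Pm"
    using sets_connected by (intro sets.countable_UN' sets.countable_INT sets.countable_UN) auto
  finally show ?thesis .
qed

lemma measure_bad_at_some_level_lt_1:
  assumes scale: "8 \<le> real L powr (real d - \<alpha>)"
    and small: "exp (- \<beta> * c * real L powr (- real d - \<alpha>)) \<le> 1 / (16 * real (L ^ d) ^ 4)"
    and z: "z \<in> lattice d"
  shows "measure E.Pm (\<Union>k. {\<omega> \<in> space E.Pm. \<not> good k z \<omega>}) < 1"
proof -
  let ?N = "real (L ^ d)" and ?bad = "\<lambda>k. {\<omega> \<in> space E.Pm. \<not> good k z \<omega>}"
  interpret prob_space E.Pm by (rule E.prob_space_Pm)
  have sets_bad: "?bad k \<in> sets E.Pm" for k
    using sets_block_event[OF depends_on_block_edges[OF z, of k "\<lambda>g _. \<not> g"]] .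
  have geometric: "(\<lambda>k. 1 / (4 * ?N ^ 2) * (1 / 2) ^ k) sums (1 / (4 * ?N ^ 2) * 2)"
    using geometric_sums[of "1 / 2 :: real"] by (intro sums_mult) simp
  have bound: "measure E.Pm (?bad k) \<le> 1 / (4 * ?N ^ 2) * (1 / 2) ^ k" for k
    using Pr_bad_le[OF scale small z, of k] unfolding E.Pr_def by (simp add: power_one_over)
  have "summable (\<lambda>k. measure E.Pm (?bad k))"
    by (rule summable_comparison_test'[OF sums_summable[OF geometric], of 0]) (use bound in simp)
  hence "measure E.Pm (\<Union>k. ?bad k) \<le> (\<Sum>k. measure E.Pm (?bad k))"
    using sets_bad by (intro finite_measure_subadditive_countably) auto
  also have "\<dots> \<le> (\<Sum>k. 1 / (4 * ?N ^ 2) * (1 / 2) ^ k)"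
    using geometric bound \<open>summable _\<close> by (intro suminf_le) (auto simp: sums_iff)
  also have "\<dots> = 1 / (2 * ?N ^ 2)"
    using sums_unique[OF geometric] by simp
  also have "\<dots> < 1"
  proof -
    have "8 \<le> ?N" using eight_le_power_of_scale[OF _ \<alpha>_pos scale] L_pos by simp
    hence "8 * 8 \<le> ?N * ?N" by (intro mult_mono) auto
    thus ?thesis by (simp add: power2_eq_square)
  qed
  finally show ?thesis .
qed

lemma percolates:
  assumes scale: "8 \<le> real L powr (real d - \<alpha>)"
    and large: "ln (16 * real (L ^ d) ^ 4) \<le> \<beta> * c * real L powr (- real d - \<alpha>)"
  shows "0 < measure (lrp_measure d J \<beta>) (infinite_cluster_event d J \<beta>)"
proof -
  let ?z = "replicate d 0" and ?N = "real (L ^ d)"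
  interpret prob_space E.Pm by (rule E.prob_space_Pm)
  let ?bad = "\<Union>k. {\<omega> \<in> space E.Pm. \<not> good k ?z \<omega>}"
  have z: "?z \<in> lattice d" unfolding lattice_def by simp
  have "exp (- \<beta> * c * real L powr (- real d - \<alpha>)) \<le> exp (- ln (16 * ?N ^ 4))"
    using large by simp
  also have "\<dots> = 1 / (16 * ?N ^ 4)"
    using L_pos by (simp add: exp_minus inverse_eq_divide)
  finally have "measure E.Pm ?bad < 1"
    by (rule measure_bad_at_some_level_lt_1[OF scale _ z])
  moreover have "?bad \<in> sets E.Pm"
    using sets_block_event[OF depends_on_block_edges[OF z, of _ "\<lambda>g _. \<not> g"]] by auto
  ultimately have "0 < measure E.Pm (space E.Pm - ?bad)"
    by (subst prob_compl) auto
  also have "\<dots> \<le> measure E.Pm (infinite_cluster_event d J \<beta>)"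
  proof (rule finite_measure_mono[OF _ sets_infinite_cluster_event])
    have "8 \<le> L ^ d"
      using eight_le_power_of_scale[OF _ \<alpha>_pos scale] L_pos by (simp flip: of_nat_power)
    hence "3 \<le> L ^ d" by linarith
    thus "space E.Pm - ?bad \<subseteq> infinite_cluster_event d J \<beta>"
      unfolding infinite_cluster_event_def Pm_eq_lrp_measure
      using infinite_cluster_if_good z by blast
  qed
  finally show ?thesis unfolding Pm_eq_lrp_measure .
qed

end

section \<open>The critical parameter\<close>

lemma beta_c_le:
  assumes "0 \<le> \<beta>" and "0 < measure (lrp_measure d J \<beta>) (infinite_cluster_event d J \<beta>)"
  shows "beta_c d J \<le> ereal \<beta>"
  unfolding beta_c_def using assms by (intro Inf_lower) blast

lemma exists_scale:
  assumes "0 < \<epsilon>"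
  shows "\<exists>L :: nat. 0 < L \<and> 8 \<le> real L powr \<epsilon>"
proof (intro exI conjI)
  let ?L = "nat \<lceil>8 powr (1 / \<epsilon>)\<rceil> + 1"
  show "0 < ?L" by simp
  have "8 powr (1 / \<epsilon>) \<le> real ?L"
    using le_of_int_ceiling[of "8 powr (1 / \<epsilon>)"] by simp linarith
  hence "(8 powr (1 / \<epsilon>)) powr \<epsilon> \<le> real ?L powr \<epsilon>"
    using assms by (intro powr_mono2) auto
  moreover have "(8 powr (1 / \<epsilon>)) powr \<epsilon> = 8" using assms by (simp add: powr_powr)
  ultimately
  show "8 \<le> real ?L powr \<epsilon>" by simp
qed

theorem mainTheorem7:
  fixes d :: nat and \<alpha> :: real
  assumes "d \<ge> 1" and "0 < \<alpha>" and "\<alpha> < real d"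
  shows "\<exists>\<beta>\<^sub>1 :: real. \<forall>(J :: int list \<Rightarrow> int list \<Rightarrow> real) (c :: real).
           admissible_kernel d J \<and> c > 0 \<and>
           (\<forall>x\<in>lattice d. \<forall>y\<in>lattice d. x \<noteq> y \<longrightarrow>
              J x y \<ge> c * linf_norm (vdiff x y) powr (- real d - \<alpha>))
           \<longrightarrow> ereal c * beta_c d J \<le> ereal \<beta>\<^sub>1"
proof -
  obtain L :: nat where L: "0 < L" and scale: "8 \<le> real L powr (real d - \<alpha>)"
    using exists_scale[of "real d - \<alpha>"] assms(3) by auto
  define \<beta>\<^sub>1 where "\<beta>\<^sub>1 = ln (16 * real (L ^ d) ^ 4) / real L powr (- real d - \<alpha>)"
  show ?thesis
  proof (intro exI[of _ \<beta>\<^sub>1] allI impI, elim conjE)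
    fix J c
    assume J: "admissible_kernel d J" and c: "0 < c"
      and lower: "\<forall>x\<in>lattice d. \<forall>y\<in>lattice d. x \<noteq> y \<longrightarrow>
                    c * linf_norm (vdiff x y) powr (- real d - \<alpha>) \<le> J x y"
    have "1 \<le> real (L ^ d) ^ 4" using L by (intro one_le_power) simp
    hence "1 \<le> 16 * real (L ^ d) ^ 4" by linarith
    hence \<beta>: "0 \<le> \<beta>\<^sub>1 / c" "\<beta>\<^sub>1 / c * c * real L powr (- real d - \<alpha>) = ln (16 * real (L ^ d) ^ 4)"
      using L c unfolding \<beta>\<^sub>1_def by simp_all
    interpret lrp d L J "\<beta>\<^sub>1 / c" c \<alpha>
      using L J c lower \<beta>(1) assms(2) by unfold_locales (auto simp: admissible_kernel_def)
    have "beta_c d J \<le> ereal (\<beta>\<^sub>1 / c)"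
      using percolates[OF scale] \<beta> by (intro beta_c_le) auto
    hence "ereal c * beta_c d J \<le> ereal c * ereal (\<beta>\<^sub>1 / c)"
      using c by (intro ereal_mult_left_mono) auto
    thus "ereal c * beta_c d J \<le> ereal \<beta>\<^sub>1" using c by simp
  qed
qed

end
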